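(* Let $\mathcal{Y}=\{1,\dots,k\}$ be a finite label set, $L\in\mathbb{R}^{k\times k}$ a task loss matrix with nonnegative entries, $\Phi:\mathbb{R}^k\times\mathcal{Y}\to\mathbb{R}$ a surrogate loss that is continuous and bounded from below, and $\mathcal{F}\subseteq\mathbb{R}^k$ a subspace of allowed score vectors. Let $H_{\Phi,L,\mathcal{F}}$ be the calibration function and let $\check H_{\Phi,L,\mathcal{F}}:[0,+\infty)\to[0,+\infty]$ be a convex non-decreasing function with $\check H_{\Phi,L,\mathcal{F}}(\varepsilon)\le H_{\Phi,L,\mathcal{F}}(\varepsilon)$ for all $\varepsilon\ge 0$. Then for any $\varepsilon>0$ such that $\check H_{\Phi,L,\mathcal{F}}(\varepsilon)$ is finite and any score function $f\in\mathcal{F}_{\mathcal{F}}$, $$\mathcal{R}_\Phi(f)<\mathcal{R}^*_{\Phi,\mathcal{F}}+\check H_{\Phi,L,\mathcal{F}}(\varepsilon)\ \Longrightarrow\ \mathcal{R}_L(f)<\mathcal{R}^*_{L,\mathcal{F}}+\varepsilon,$$ where $\mathcal{R}^*_{\Phi,\mathcal{F}}=\inf_{g\in\mathcal{F}_{\mathcal{F}}}\mathcal{R}_\Phi(g)$ and $\mathcal{R}^*_{L,\mathcal{F}}=\inf_{g\in\mathcal{F}_{\mathcal{F}}}\mathcal{R}_L(g)$.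
   Context: Predictor: for $f\in\mathbb{R}^k$, $\mathrm{pred}(f)$ is the smallest index $c$ among those maximizing $f_c$. For $q$ in the probability simplex $\Delta_k$, the conditional risk is $\ell(f,q)=\sum_{c=1}^k q_c L(\mathrm{pred}(f),c)$ and the conditional surrogate risk is $\phi(f,q)=\sum_{c=1}^k q_c\Phi(f,c)$; their excesses are $\delta\ell(f,q)=\ell(f,q)-\inf_{\hat f\in\mathcal{F}}\ell(\hat f,q)$ and $\delta\phi(f,q)=\phi(f,q)-\inf_{\hat f\in\mathcal{F}}\phi(\hat f,q)$. The calibration function is, for $\varepsilon\ge0$, $H_{\Phi,L,\mathcal{F}}(\varepsilon)=\inf\{\delta\phi(f,q): f\in\mathcal{F}, q\in\Delta_k, \delta\ell(f,q)\ge\varepsilon\}$, set to $+\infty$ if the feasible set is empty. Data: $(x,y)$ are drawn from a distribution $\mathcal{D}$ on $\mathcal{X}\times\mathcal{Y}$; $\mathcal{F}_{\mathcal{F}}$ is the set of all Borel measurable functions $f:\mathcal{X}\to\mathcal{F}$; $\mathcal{R}_L(f)=\mathbb{E}_{(x,y)\sim\mathcal{D}}L(\mathrm{pred}(f(x)),y)$ and $\mathcal{R}_\Phi(f)=\mathbb{E}_{(x,y)\sim\mathcal{D}}\Phi(f(x),y)$. *)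

theory Defs
  imports "HOL-Probability.Probability"
begin

text \<open>Labels are the elements of a finite linearly ordered type 'k (so Y = {1..k}
  with k = CARD('k)); score vectors are elements of real^'k.\<close>

definition pred :: "real ^ 'k::{finite,linorder} \<Rightarrow> 'k::{finite,linorder}" where
  "pred f = (LEAST c. \<forall>c'. f $ c' \<le> f $ c)"

definition prob_simplex :: "(real ^ 'k::finite) set" where
  "prob_simplex = {q. (\<forall>c. 0 \<le> q $ c) \<and> (\<Sum>c\<in>UNIV. q $ c) = 1}"

definition cond_risk :: "('k::{finite,linorder} \<Rightarrow> 'k::{finite,linorder} \<Rightarrow> real) \<Rightarrow> real ^ 'k::{finite,linorder} \<Rightarrow> real ^ 'k::{finite,linorder} \<Rightarrow> real" where
  "cond_risk L f q = (\<Sum>c\<in>UNIV. q $ c * L (pred f) c)"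

definition cond_surr :: "(real ^ 'k::finite \<Rightarrow> 'k::finite \<Rightarrow> real) \<Rightarrow> real ^ 'k::finite \<Rightarrow> real ^ 'k::finite \<Rightarrow> real" where
  "cond_surr Phi f q = (\<Sum>c\<in>UNIV. q $ c * Phi f c)"

definition excess_risk :: "('k::{finite,linorder} \<Rightarrow> 'k::{finite,linorder} \<Rightarrow> real) \<Rightarrow> (real ^ 'k::{finite,linorder}) set \<Rightarrow> real ^ 'k::{finite,linorder} \<Rightarrow> real ^ 'k::{finite,linorder} \<Rightarrow> real" where
  "excess_risk L F f q = cond_risk L f q - (INF g\<in>F. cond_risk L g q)"

definition excess_surr :: "(real ^ 'k::finite \<Rightarrow> 'k::finite \<Rightarrow> real) \<Rightarrow> (real ^ 'k::finite) set \<Rightarrow> real ^ 'k::finite \<Rightarrow> real ^ 'k::finite \<Rightarrow> real" where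
  "excess_surr Phi F f q = cond_surr Phi f q - (INF g\<in>F. cond_surr Phi g q)"

text \<open>Calibration function; Inf of the empty set of ereals is +\<infinity>.\<close>
definition calib :: "(real ^ 'k::{finite,linorder} \<Rightarrow> 'k::{finite,linorder} \<Rightarrow> real) \<Rightarrow> ('k::{finite,linorder} \<Rightarrow> 'k::{finite,linorder} \<Rightarrow> real) \<Rightarrow> (real ^ 'k::{finite,linorder}) set \<Rightarrow> real \<Rightarrow> ereal" where
  "calib Phi L F eps = Inf {ereal (excess_surr Phi F f q) | f q.
       f \<in> F \<and> q \<in> prob_simplex \<and> excess_risk L F f q \<ge> eps}"

definition eexp :: "'a measure \<Rightarrow> ('a \<Rightarrow> real) \<Rightarrow> ereal" where
  "eexp M g = enn2ereal (\<integral>\<^sup>+ z. ennreal (g z) \<partial>M) - enn2ereal (\<integral>\<^sup>+ z. ennreal (- g z) \<partial>M)"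

definition score_funs :: "'x measure \<Rightarrow> (real ^ 'k::finite) set \<Rightarrow> ('x \<Rightarrow> real ^ 'k::finite) set" where
  "score_funs MX F = {f. f \<in> borel_measurable MX \<and> (\<forall>x\<in>space MX. f x \<in> F)}"

definition risk_L :: "('x \<times> 'k::{finite,linorder}) measure \<Rightarrow> ('k::{finite,linorder} \<Rightarrow> 'k::{finite,linorder} \<Rightarrow> real) \<Rightarrow> ('x \<Rightarrow> real ^ 'k::{finite,linorder}) \<Rightarrow> ereal" where
  "risk_L D L f = eexp D (\<lambda>(x, y). L (pred (f x)) y)"

definition risk_Phi :: "('x \<times> 'k::finite) measure \<Rightarrow> (real ^ 'k::finite \<Rightarrow> 'k::finite \<Rightarrow> real) \<Rightarrow> ('x \<Rightarrow> real ^ 'k::finite) \<Rightarrow> ereal" where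
  "risk_Phi D Phi f = eexp D (\<lambda>(x, y). Phi (f x) y)"

definition ereal_convex_nonneg :: "(real \<Rightarrow> ereal) \<Rightarrow> bool" where
  "ereal_convex_nonneg H \<longleftrightarrow> (\<forall>x\<ge>0. \<forall>y\<ge>0. \<forall>t\<in>{0..1::real}.
      H ((1 - t) * x + t * y) \<le> ereal (1 - t) * H x + ereal t * H y)"

end

theory Submission
  imports Defs
begin

text \<open>Disintegrating \<open>D\<close> along the label gives a marginal \<open>P\<close> on \<open>X\<close> and conditional
  label distributions \<open>q(x)\<close> in the simplex, so both risks become \<open>P\<close>-integrals of conditional
  risks. The optimal task risk is at least the integral of the pointwise optimal conditional
  risk, and the optimal surrogate risk is at most the integral of its pointwise infimum, which
  a measurable minimising sequence through a countable dense subset of \<open>F\<close> attains in the limit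
  by dominated convergence. So the excess risks of \<open>f\<close> are controlled by the integrals of the
  pointwise excess risks, where by definition of the calibration function the excess surrogate
  risk dominates \<open>Hc\<close> of the excess task risk. Jensen's inequality for the convex non-decreasing
  \<open>Hc\<close>, through a supporting line at \<open>eps\<close>, turns an expected excess task risk of at least
  \<open>eps\<close> into an expected excess surrogate risk of at least \<open>Hc eps\<close>.\<close>

section \<open>Convex functions with values in the extended reals\<close>

lemma ereal_convex_nonneg_three_chord:
  fixes H :: "real \<Rightarrow> ereal"
  assumes conv: "ereal_convex_nonneg H" and "0 \<le> u" "u < e" "e < w"
    and fin: "\<bar>H u\<bar> \<noteq> \<infinity>" "\<bar>H e\<bar> \<noteq> \<infinity>" "\<bar>H w\<bar> \<noteq> \<infinity>"
  shows "(real_of_ereal (H e) - real_of_ereal (H u)) / (e - u)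
    \<le> (real_of_ereal (H w) - real_of_ereal (H e)) / (w - e)"
proof -
  define t where "t = (e - u) / (w - u)"
  define hu hw where "hu = real_of_ereal (H u)" and "hw = real_of_ereal (H w)"
  have t: "t \<in> {0..1}" "(w - u) * t = e - u"
    using assms(2-4) by (auto simp: t_def field_simps)
  then have e_comb: "(1 - t) * u + t * w = e"
    by (simp add: algebra_simps)
  have "H e \<le> ereal (1 - t) * H u + ereal t * H w"
    using conv t e_comb assms(2-4) unfolding ereal_convex_nonneg_def
    by (metis less_eq_real_def order.trans)
  also have "\<dots> = ereal ((1 - t) * hu + t * hw)"
    using fin unfolding hu_def hw_def by (metis ereal_real' plus_ereal.simps(1) times_ereal.simps(1))
  finally have "real_of_ereal (H e) \<le> (1 - t) * hu + t * hw"
    using fin by (metis ereal_less_eq(3) ereal_real')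
  then have "(w - u) * real_of_ereal (H e) \<le> (w - u) * ((1 - t) * hu + t * hw)"
    using assms(2-4) by (intro mult_left_mono) auto
  also have "\<dots> = ((w - u) * (1 - t)) * hu + ((w - u) * t) * hw"
    by (simp add: algebra_simps)
  also have "\<dots> = (w - e) * hu + (e - u) * hw"
    using t(2) by (simp add: right_diff_distrib)
  finally have "(real_of_ereal (H e) - hu) * (w - e) \<le> (hw - real_of_ereal (H e)) * (e - u)"
    by (simp add: algebra_simps)
  then show ?thesis
    using assms(2-4) unfolding hu_def hw_def by (simp add: divide_simps mult.commute)
qed

text \<open>The supporting slope at \<open>eps\<close> is the infimum of the chord slopes to the right of
  \<open>eps\<close>; a finite value of \<open>H\<close> beyond \<open>eps\<close> is what keeps it finite.\<close>

lemma ereal_convex_nonneg_support_line: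
  fixes H :: "real \<Rightarrow> ereal"
  assumes conv: "ereal_convex_nonneg H" and mono: "mono_on {0..} H" and H0: "H 0 \<noteq> -\<infinity>"
    and eps: "0 < eps" "eps < z" and fin_z: "\<bar>H z\<bar> \<noteq> \<infinity>"
  obtains s where "0 \<le> s" "\<And>e. 0 \<le> e \<Longrightarrow> ereal (real_of_ereal (H eps) + s * (e - eps)) \<le> H e"
proof -
  define h where "h e = real_of_ereal (H e)" for e
  have H_ge: "H 0 \<le> H e" if "0 \<le> e" for e
    using mono that by (auto intro: mono_onD)
  have fin: "\<bar>H e\<bar> \<noteq> \<infinity>" if "0 \<le> e" "H e < \<infinity>" for e
    using H_ge[OF that(1)] H0 that(2) by auto
  have fin_le: "\<bar>H e\<bar> \<noteq> \<infinity>" if "0 \<le> e" "e \<le> z" for e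
    using mono_onD[OF mono _ _ that(2)] that fin_z fin[OF that(1)] eps by fastforce
  have H_eps: "H eps = ereal (h eps)"
    using fin_le[of eps] eps unfolding h_def by (simp add: ereal_real')
  define S where "S = {(h e - h eps) / (e - eps) | e. eps < e \<and> H e < \<infinity>}"
  have "H z < \<infinity>" using fin_z by auto
  then have S_ne: "S \<noteq> {}" unfolding S_def using eps by auto
  have slope_le_S: "(h eps - h e) / (eps - e) \<le> x" if "x \<in> S" "0 \<le> e" "e < eps" for x e
  proof -
    obtain w where "x = (h w - h eps) / (w - eps)" "eps < w" "H w < \<infinity>"
      using \<open>x \<in> S\<close> unfolding S_def by auto
    then show ?thesis unfolding h_def
      using ereal_convex_nonneg_three_chord[OF conv, of e eps w] that eps fin fin_le by auto
  qed
  have bdd: "bdd_below S"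
    using slope_le_S[of _ 0] eps unfolding bdd_below_def by blast
  define s where "s = Inf S"
  have "0 \<le> s" unfolding s_def
  proof (rule cInf_greatest[OF S_ne])
    fix x assume "x \<in> S"
    then obtain e where x: "x = (h e - h eps) / (e - eps)" "eps < e" "H e < \<infinity>"
      unfolding S_def by auto
    have "H eps \<le> H e" using mono_onD[OF mono] eps x by auto
    then have "h eps \<le> h e"
      using fin[of e] x eps H_eps unfolding h_def
      by (metis ereal_less_eq(3) ereal_real' less_le_not_le less_trans)
    then show "0 \<le> x" using x by auto
  qed
  moreover have "ereal (h eps + s * (e - eps)) \<le> H e" if "0 \<le> e" for e
  proof (cases "H e < \<infinity>")
    case True
    have "h eps + s * (e - eps) \<le> h e"
    proof (cases e eps rule: linorder_cases)
      case greater
      have "s \<le> (h e - h eps) / (e - eps)" unfolding s_def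
        by (rule cInf_lower[OF _ bdd]) (use greater True in \<open>auto simp: S_def\<close>)
      then show ?thesis using greater by (simp add: pos_le_divide_eq)
    next
      case less
      have "(h eps - h e) / (eps - e) \<le> s" unfolding s_def
        by (rule cInf_greatest[OF S_ne slope_le_S]) (use less that in auto)
      then show ?thesis using less by (simp add: pos_divide_le_eq algebra_simps)
    qed simp
    moreover have "H e = ereal (h e)" using fin[OF that True] unfolding h_def by (simp add: ereal_real')
    ultimately show ?thesis by simp
  next
    case False
    then show ?thesis by (simp add: not_less)
  qed
  ultimately show ?thesis using that unfolding h_def by blast
qed

lemma ereal_convex_mono_le_integral:
  fixes H :: "real \<Rightarrow> ereal" and u v :: "'a \<Rightarrow> real"
  assumes conv: "ereal_convex_nonneg H" and mono: "mono_on {0..} H" and H0: "H 0 \<noteq> -\<infinity>"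
    and eps: "0 < eps" "\<bar>H eps\<bar> \<noteq> \<infinity>"
    and "prob_space M" and u: "integrable M u" and v: "integrable M v"
    and u_nonneg: "\<And>x. x \<in> space M \<Longrightarrow> 0 \<le> u x"
    and H_le: "\<And>x. x \<in> space M \<Longrightarrow> H (u x) \<le> ereal (v x)"
    and eps_le: "eps \<le> (\<integral>x. u x \<partial>M)"
  shows "H eps \<le> ereal (\<integral>x. v x \<partial>M)"
proof -
  interpret prob_space M by fact
  define he where "he = real_of_ereal (H eps)"
  have H_eps: "H eps = ereal he" unfolding he_def using eps(2) by (simp add: ereal_real')
  have "he \<le> (\<integral>x. v x \<partial>M)"
  proof (cases "\<exists>x0\<in>space M. eps < u x0")
    case True
    then obtain x0 where x0: "x0 \<in> space M" "eps < u x0" by blast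
    have "H 0 \<le> H (u x0)" using mono_onD[OF mono] u_nonneg[OF x0(1)] by auto
    then have fin: "\<bar>H (u x0)\<bar> \<noteq> \<infinity>" using H_le[OF x0(1)] H0 by auto
    obtain s where "0 \<le> s"
      and supp: "\<And>e. 0 \<le> e \<Longrightarrow> ereal (real_of_ereal (H eps) + s * (e - eps)) \<le> H e"
      using conv mono H0 eps(1) x0(2) fin by (rule ereal_convex_nonneg_support_line) (rule that)
    have "ereal (he + s * (u x - eps)) \<le> ereal (v x)" if "x \<in> space M" for x
      using supp[OF u_nonneg[OF that], folded he_def] H_le[OF that] by (rule order.trans)
    then have "(\<integral>x. he + s * (u x - eps) \<partial>M) \<le> (\<integral>x. v x \<partial>M)"
      using u v by (intro integral_mono) auto
    moreover have "(\<integral>x. he + s * (u x - eps) \<partial>M) = he + s * ((\<integral>x. u x \<partial>M) - eps)"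
      using u by (simp add: prob_space algebra_simps)
    moreover have "0 \<le> s * ((\<integral>x. u x \<partial>M) - eps)" using \<open>0 \<le> s\<close> eps_le by simp
    ultimately show ?thesis by linarith
  next
    case False
    then have u_le: "\<And>x. x \<in> space M \<Longrightarrow> u x \<le> eps" by (simp add: not_less)
    have "(\<integral>x. eps - u x \<partial>M) = 0"
    proof -
      have "0 \<le> (\<integral>x. eps - u x \<partial>M)" by (rule integral_nonneg_AE) (use u_le in auto)
      moreover have "(\<integral>x. eps - u x \<partial>M) = eps - (\<integral>x. u x \<partial>M)" using u by (simp add: prob_space)
      ultimately show ?thesis using eps_le by linarith
    qed
    then have "AE x in M. eps - u x = 0"
      using u u_le by (subst (asm) integral_nonneg_eq_0_iff_AE) auto
    then have "AE x in M. he \<le> v x"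
    proof (rule AE_mp[OF _ AE_I2], intro impI)
      fix x assume "x \<in> space M" "eps - u x = 0"
      then have "ereal he \<le> ereal (v x)" using H_le[of x] H_eps by simp
      then show "he \<le> v x" by simp
    qed
    then have "(\<integral>x. he \<partial>M) \<le> (\<integral>x. v x \<partial>M)" by (intro integral_mono_AE v) simp_all
    then show ?thesis by (simp add: prob_space)
  qed
  then show ?thesis using H_eps by simp
qed

section \<open>Extended expectations\<close>

lemma eexp_eq_integral:
  assumes "integrable M u"
  shows "eexp M u = ereal (\<integral>z. u z \<partial>M)"
proof -
  have "enn2ereal x = ereal (enn2real x)" if "x < top" for x :: ennreal
    using that by (metis enn2ereal_ennreal enn2real_nonneg ennreal_enn2real)
  moreover have "(\<integral>\<^sup>+z. ennreal (u z) \<partial>M) < top" "(\<integral>\<^sup>+z. ennreal (- u z) \<partial>M) < top"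
    using assms by (auto simp: real_integrable_def top.not_eq_extremum)
  ultimately show ?thesis
    unfolding eexp_def real_lebesgue_integral_def[OF assms] by simp
qed

lemma (in prob_space) eexp_eq_shift:
  assumes u: "u \<in> borel_measurable M" and lb: "\<And>z. z \<in> space M \<Longrightarrow> B \<le> u z"
  shows "eexp M u = ereal B + enn2ereal (\<integral>\<^sup>+z. ennreal (u z - B) \<partial>M)"
proof (cases "integrable M u")
  case True
  have "(\<integral>\<^sup>+z. ennreal (u z - B) \<partial>M) = ennreal (\<integral>z. u z - B \<partial>M)"
    using True lb by (intro nn_integral_eq_integral) auto
  moreover have "(\<integral>z. u z - B \<partial>M) = (\<integral>z. u z \<partial>M) - B"
    using True by (simp add: prob_space)
  moreover have "0 \<le> (\<integral>z. u z - B \<partial>M)"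
    using lb by (intro integral_nonneg_AE) auto
  ultimately show ?thesis using eexp_eq_integral[OF True] by simp
next
  case False
  have neg_finite: "(\<integral>\<^sup>+z. ennreal (- u z) \<partial>M) < top"
  proof -
    have "(\<integral>\<^sup>+z. ennreal (- u z) \<partial>M) \<le> (\<integral>\<^sup>+z. ennreal (- B) \<partial>M)"
      using lb by (intro nn_integral_mono ennreal_leI) auto
    then show ?thesis by (simp add: emeasure_space_1 le_less_trans)
  qed
  have shift_infinite: "(\<integral>\<^sup>+z. ennreal (u z - B) \<partial>M) = top"
  proof (rule ccontr)
    assume "(\<integral>\<^sup>+z. ennreal (u z - B) \<partial>M) \<noteq> top"
    then have "integrable M (\<lambda>z. u z - B)"
      using u lb by (intro integrableI_nonneg) (auto simp: top.not_eq_extremum)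
    then have "integrable M (\<lambda>z. (u z - B) + B)" by (rule Bochner_Integration.integrable_add) simp
    then show False using False by simp
  qed
  have "(\<integral>\<^sup>+z. ennreal (u z - B) \<partial>M) \<le> (\<integral>\<^sup>+z. ennreal (u z) + ennreal (- B) \<partial>M)"
  proof (rule nn_integral_mono)
    fix z
    have "ennreal (u z - B) \<le> ennreal (max 0 (u z) + max 0 (- B))" by (rule ennreal_leI) simp
    then show "ennreal (u z - B) \<le> ennreal (u z) + ennreal (- B)"
      by (simp add: ennreal_plus ennreal_max_0)
  qed
  also have "\<dots> = (\<integral>\<^sup>+z. ennreal (u z) \<partial>M) + ennreal (- B)"
    using u by (subst nn_integral_add) (auto simp: emeasure_space_1)
  finally have "(\<integral>\<^sup>+z. ennreal (u z) \<partial>M) = top"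
    using shift_infinite by (simp add: top_unique)
  then show ?thesis
    unfolding eexp_def using shift_infinite neg_finite by (simp add: top.not_eq_extremum)
qed

section \<open>Conditional risks on the probability simplex\<close>

lemma pred_eq_iff:
  "pred v = c \<longleftrightarrow> (\<forall>c'. v $ c' \<le> v $ c) \<and> (\<forall>d<c. \<exists>c'. v $ d < v $ c')"
proof -
  define S where "S = {c. \<forall>c'. v $ c' \<le> v $ c}"
  have "Max (range (($) v)) \<in> range (($) v)" by (rule Max_in) auto
  then obtain m where "v $ m = Max (range (($) v))" by (metis rangeE)
  then have "m \<in> S" unfolding S_def by (simp add: Max_ge)
  then have S: "finite S" "S \<noteq> {}" by auto
  have pred_Min: "pred v = Min S" unfolding pred_def
  proof (rule Least_equality)
    show "\<forall>c'. v $ c' \<le> v $ Min S" using Min_in[OF S] unfolding S_def by auto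
    show "\<And>y. \<forall>c'. v $ c' \<le> v $ y \<Longrightarrow> Min S \<le> y" using S(1) unfolding S_def by (auto intro: Min_le)
  qed
  show ?thesis unfolding pred_Min Min_eq_iff[OF S] unfolding S_def
    by (auto simp: not_le[symmetric])
qed

lemma measurable_pred: "(pred :: real ^ 'k::{finite,linorder} \<Rightarrow> 'k) \<in> measurable borel (count_space UNIV)"
proof -
  have "pred -` {a} \<in> sets borel" for a :: 'k
  proof -
    have "pred -` {a} = {v. (\<forall>c'\<in>UNIV. v $ c' \<le> (v $ a :: real)) \<and>
        (\<forall>d\<in>UNIV. d < a \<longrightarrow> (\<exists>c'\<in>UNIV. v $ d < v $ c'))}"
      using pred_eq_iff[of _ a] by auto
    also have "\<dots> \<in> sets borel" by measurable
    finally show ?thesis .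
  qed
  then show ?thesis by (subst measurable_count_space_eq_countable) auto
qed

lemma prob_simplex_sum_ge:
  assumes "q \<in> prob_simplex" "\<And>c. a \<le> g c"
  shows "a \<le> (\<Sum>c\<in>UNIV. q $ c * g c)"
proof -
  have "a = (\<Sum>c\<in>UNIV. q $ c * a)" using assms(1) by (simp add: prob_simplex_def sum_distrib_right[symmetric])
  also have "\<dots> \<le> (\<Sum>c\<in>UNIV. q $ c * g c)"
    using assms by (auto simp: prob_simplex_def intro!: sum_mono mult_left_mono)
  finally show ?thesis .
qed

lemma prob_simplex_sum_le:
  assumes "q \<in> prob_simplex" "\<And>c. g c \<le> a"
  shows "(\<Sum>c\<in>UNIV. q $ c * g c) \<le> a"
  using prob_simplex_sum_ge[of q "-a" "\<lambda>c. - g c"] assms by (simp add: sum_negf)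

lemma calib_le_excess_surr:
  assumes "f \<in> F" "q \<in> prob_simplex" "e \<le> excess_risk L F f q"
  shows "calib Phi L F e \<le> ereal (excess_surr Phi F f q)"
  unfolding calib_def using assms by (intro Inf_lower) blast

lemma INF_cond_risk_eq_Min:
  assumes "F \<noteq> {}"
  shows "(INF h\<in>F. cond_risk L h q) = Min ((\<lambda>c'. \<Sum>c\<in>UNIV. q $ c * L c' c) ` pred ` F)"
proof -
  have "(\<lambda>h. cond_risk L h q) ` F = (\<lambda>c'. \<Sum>c\<in>UNIV. q $ c * L c' c) ` pred ` F"
    unfolding cond_risk_def by (auto simp: image_image)
  then show ?thesis using assms by (simp add: cInf_eq_Min)
qed

lemma cond_risk_bounds:
  assumes "\<And>c y. 0 \<le> L c y" "q \<in> prob_simplex"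
  shows "0 \<le> cond_risk L f q" "cond_risk L f q \<le> (\<Sum>a\<in>UNIV. \<Sum>b\<in>UNIV. L a b)"
proof -
  have "L a b \<le> (\<Sum>a\<in>UNIV. \<Sum>b\<in>UNIV. L a b)" for a b
    using assms(1) member_le_sum[of a UNIV "\<lambda>a. \<Sum>b\<in>UNIV. L a b"] member_le_sum[of b UNIV "L a"]
    by (simp add: sum_nonneg)
  then show "cond_risk L f q \<le> (\<Sum>a\<in>UNIV. \<Sum>b\<in>UNIV. L a b)"
    unfolding cond_risk_def using assms(2) by (intro prob_simplex_sum_le)
  show "0 \<le> cond_risk L f q"
    unfolding cond_risk_def using assms by (intro prob_simplex_sum_ge)
qed

lemma INF_cond_risk_le:
  assumes "\<And>c y. 0 \<le> L c y" "q \<in> prob_simplex" "h \<in> F"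
  shows "(INF g\<in>F. cond_risk L g q) \<le> cond_risk L h q"
  using cond_risk_bounds(1)[of L, OF assms(1,2)] assms(3)
  by (intro cINF_lower) (auto simp: bdd_below_def)

lemma continuous_on_cond_surr:
  assumes "\<And>y. continuous_on UNIV (\<lambda>v. Phi v y)"
  shows "continuous_on UNIV (\<lambda>v. cond_surr Phi v q)"
  unfolding cond_surr_def by (intro continuous_intros assms)

section \<open>Measurable minimising sequences\<close>

lemma dense_sequence:
  fixes F :: "'a::{metric_space, second_countable_topology} set"
  assumes "F \<noteq> {}"
  obtains t :: "nat \<Rightarrow> 'a" where "range t \<subseteq> F" "F \<subseteq> closure (range t)"
proof -
  obtain T where T: "countable T" "T \<subseteq> F" "F \<subseteq> closure T" by (rule separable)
  then have "T \<noteq> {}" using assms by auto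
  then have "range (from_nat_into T) = T" using T(1) by (metis range_from_nat_into)
  then show ?thesis using that T by metis
qed

lemma cINF_eq_INF_dense_sequence:
  fixes \<phi> :: "'a::metric_space \<Rightarrow> real"
  assumes cont: "continuous_on UNIV \<phi>" and bdd: "bdd_below (\<phi> ` F)"
    and t: "range t \<subseteq> F" "F \<subseteq> closure (range t)"
  shows "(INF g\<in>F. \<phi> g) = (INF n. \<phi> (t n))"
proof (rule antisym)
  have "F \<noteq> {}" using t by auto
  have bdd_t: "bdd_below (range (\<lambda>n. \<phi> (t n)))"
    using bdd t(1) by (auto simp: bdd_below_def)
  show "(INF g\<in>F. \<phi> g) \<le> (INF n. \<phi> (t n))"
    by (rule cINF_greatest) (use t(1) bdd in \<open>auto intro: cINF_lower\<close>)
  show "(INF n. \<phi> (t n)) \<le> (INF g\<in>F. \<phi> g)"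
  proof (rule cINF_greatest[OF \<open>F \<noteq> {}\<close>])
    fix g assume "g \<in> F"
    show "(INF n. \<phi> (t n)) \<le> \<phi> g"
    proof (rule field_le_epsilon)
      fix d :: real assume "0 < d"
      then obtain r where "r > 0" and r: "\<And>y. dist y g < r \<Longrightarrow> dist (\<phi> y) (\<phi> g) < d"
        using cont unfolding continuous_on_iff by (meson UNIV_I)
      have "g \<in> closure (range t)" using \<open>g \<in> F\<close> t(2) by auto
      then obtain n where "dist (t n) g < r"
        using \<open>r > 0\<close> unfolding closure_approachable by blast
      then have "(INF n. \<phi> (t n)) \<le> \<phi> (t n) \<and> \<phi> (t n) \<le> \<phi> g + d"
        using r cINF_lower[OF bdd_t] by (force simp: dist_real_def)
      then show "(INF n. \<phi> (t n)) \<le> \<phi> g + d" by linarith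
    qed
  qed
qed

text \<open>A pointwise choice of minimiser among \<open>t 0, \<dots>, t m\<close> that stays measurable in \<open>x\<close>,
  since it only involves finitely many comparisons.\<close>

primrec running_argmin :: "(nat \<Rightarrow> 'a) \<Rightarrow> ('a \<Rightarrow> 'x \<Rightarrow> real) \<Rightarrow> nat \<Rightarrow> 'x \<Rightarrow> 'a" where
  "running_argmin t c 0 x = t 0"
| "running_argmin t c (Suc m) x =
    (if c (t (Suc m)) x < c (running_argmin t c m x) x then t (Suc m) else running_argmin t c m x)"

lemma running_argmin_in_range: "running_argmin t c m x \<in> range t"
  by (induction m) auto

lemma running_argmin_le: "n \<le> m \<Longrightarrow> c (running_argmin t c m x) x \<le> c (t n) x"
proof (induction m)
  case (Suc m)
  then show ?case by (cases "n = Suc m") auto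
qed simp

lemma measurable_running_argmin:
  assumes "\<And>n. t n \<in> space N"
    and c: "\<And>g. g \<in> measurable M N \<Longrightarrow> (\<lambda>x. c (g x) x) \<in> borel_measurable M"
  shows "running_argmin t c m \<in> measurable M N"
proof (induction m)
  case 0
  then show ?case using assms(1) by (simp add: running_argmin.simps(1)[abs_def])
next
  case (Suc m)
  have "{x \<in> space M. c (t (Suc m)) x < c (running_argmin t c m x) x} \<in> sets M"
    using c[OF measurable_const[OF assms(1)]] c[OF Suc.IH] by measurable
  then show ?case
    by (simp add: running_argmin.simps(2)[abs_def] measurable_If Suc.IH assms(1))
qed

lemma running_argmin_tendsto_INF:
  assumes "bdd_below (range (\<lambda>n. c (t n) x))"
  shows "(\<lambda>m. c (running_argmin t c m x) x) \<longlonglongrightarrow> (INF n. c (t n) x)"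
proof -
  let ?r = "\<lambda>m. c (running_argmin t c m x) x"
  have r_range: "?r m \<in> range (\<lambda>n. c (t n) x)" for m
    using running_argmin_in_range[of t c m x] by auto
  then have bdd: "bdd_below (range ?r)"
    using assms unfolding bdd_below_def by fastforce
  have "(INF m. ?r m) = (INF n. c (t n) x)"
  proof (rule antisym)
    show "(INF m. ?r m) \<le> (INF n. c (t n) x)"
    proof (rule cINF_greatest)
      fix n
      have "(INF m. ?r m) \<le> ?r n" by (rule cINF_lower[OF bdd]) simp
      also have "\<dots> \<le> c (t n) x" by (rule running_argmin_le) simp
      finally show "(INF m. ?r m) \<le> c (t n) x" .
    qed simp
    show "(INF n. c (t n) x) \<le> (INF m. ?r m)"
    proof (rule cINF_greatest)
      fix m
      obtain n where "?r m = c (t n) x" using r_range[of m] by (auto simp del: running_argmin.simps)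
      then show "(INF n. c (t n) x) \<le> ?r m" using cINF_lower[OF assms] by simp
    qed simp
  qed
  moreover have "decseq ?r" by (rule decseq_SucI) simp
  ultimately show ?thesis using LIMSEQ_decseq_INF[OF bdd] by simp
qed

section \<open>Disintegration along the labels\<close>

lemma measurable_pair_measure_countable2:
  assumes "countable A"
    and [measurable]: "\<And>y. y \<in> A \<Longrightarrow> (\<lambda>x. f (x, y)) \<in> measurable N K"
  shows "f \<in> measurable (N \<Otimes>\<^sub>M count_space A) K"
  using _ _ assms(1)
  by (rule measurable_compose_countable'[where f="\<lambda>b a. f (fst a, b)" and g=snd and I=A, simplified])
    simp_all

locale labelled_measure =
  fixes D :: "('x \<times> 'k::finite) measure" and MX :: "'x measure"
  assumes prob_space_D: "prob_space D"
    and sets_D: "sets D = sets (MX \<Otimes>\<^sub>M count_space UNIV)"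
begin

sublocale D: prob_space D by (rule prob_space_D)

lemma measurable_D_iff: "measurable D N = measurable (MX \<Otimes>\<^sub>M count_space UNIV) N"
  by (rule measurable_cong_sets[OF sets_D refl])

lemma measurable_fst_D: "fst \<in> measurable D MX"
  unfolding measurable_D_iff by simp

abbreviation PX :: "'x measure" where "PX \<equiv> distr D MX fst"

sublocale PX: prob_space PX by (rule D.prob_space_distr[OF measurable_fst_D])

definition label_marginal :: "'k \<Rightarrow> 'x measure" where
  "label_marginal c = distr (density D (indicator {z. snd z = c})) MX fst"

lemma sets_label_marginal [simp]: "sets (label_marginal c) = sets MX"
  by (simp add: label_marginal_def)

lemma measurable_label_indicator: "indicator {z. snd z = c} \<in> borel_measurable D"
  unfolding measurable_D_iff by measurable

lemma absolutely_continuous_label_marginal: "absolutely_continuous PX (label_marginal c)"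
  unfolding absolutely_continuous_def
proof
  fix A assume A: "A \<in> null_sets PX"
  then have "A \<in> sets MX" by auto
  have "fst -` A \<inter> space D \<in> null_sets D"
    using A \<open>A \<in> sets MX\<close> measurable_fst_D by (auto simp: null_sets_def emeasure_distr)
  then have "fst -` A \<inter> space D \<in> null_sets (density D (indicator {z. snd z = c}))"
    using absolutely_continuousI_density[OF measurable_label_indicator]
    unfolding absolutely_continuous_def by blast
  then show "A \<in> null_sets (label_marginal c)"
    using \<open>A \<in> sets MX\<close> measurable_fst_D
    by (auto simp: null_sets_def label_marginal_def emeasure_distr)
qed

lemma nn_integral_D_eq_sum_label_marginal:
  assumes h: "h \<in> borel_measurable (MX \<Otimes>\<^sub>M count_space UNIV)"
  shows "(\<integral>\<^sup>+z. h z \<partial>D) = (\<Sum>c\<in>UNIV. \<integral>\<^sup>+x. h (x, c) \<partial>label_marginal c)"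
proof -
  have h_c: "(\<lambda>x. h (x, c)) \<in> borel_measurable MX" for c using h by measurable
  have "h z = (\<Sum>c\<in>UNIV. indicator {z. snd z = c} z * h (fst z, c))" for z
    by (simp add: indicator_def sum.delta' prod.case_eq_if)
  then have "(\<integral>\<^sup>+z. h z \<partial>D) = (\<integral>\<^sup>+z. (\<Sum>c\<in>UNIV. indicator {z. snd z = c} z * h (fst z, c)) \<partial>D)"
    by simp
  also have "\<dots> = (\<Sum>c\<in>UNIV. \<integral>\<^sup>+z. indicator {z. snd z = c} z * h (fst z, c) \<partial>D)"
  proof (rule nn_integral_sum)
    show "(\<lambda>z. indicator {z. snd z = c} z * h (fst z, c)) \<in> borel_measurable D" for c
      unfolding measurable_D_iff using h by measurable
  qed
  also have "\<dots> = (\<Sum>c\<in>UNIV. \<integral>\<^sup>+x. h (x, c) \<partial>label_marginal c)"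
  proof (rule sum.cong[OF refl])
    fix c
    have "(\<integral>\<^sup>+x. h (x, c) \<partial>label_marginal c)
        = (\<integral>\<^sup>+z. h (fst z, c) \<partial>density D (indicator {z. snd z = c}))"
      unfolding label_marginal_def by (rule nn_integral_distr) (auto simp: measurable_fst_D h_c)
    also have "\<dots> = (\<integral>\<^sup>+z. indicator {z. snd z = c} z * h (fst z, c) \<partial>D)"
      by (rule nn_integral_density) (auto intro: measurable_label_indicator measurable_compose[OF measurable_fst_D h_c])
    finally show "(\<integral>\<^sup>+z. indicator {z. snd z = c} z * h (fst z, c) \<partial>D)
        = (\<integral>\<^sup>+x. h (x, c) \<partial>label_marginal c)"
      by simp
  qed
  finally show ?thesis .
qed

definition label_density :: "'k \<Rightarrow> 'x \<Rightarrow> ennreal" where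
  "label_density c = RN_deriv PX (label_marginal c)"

lemma measurable_label_density [measurable]: "label_density c \<in> borel_measurable MX"
  unfolding label_density_def
  using borel_measurable_RN_deriv[of PX "label_marginal c"] by simp

lemma nn_integral_D_eq_label_density:
  assumes h: "h \<in> borel_measurable (MX \<Otimes>\<^sub>M count_space UNIV)"
  shows "(\<integral>\<^sup>+z. h z \<partial>D) = (\<integral>\<^sup>+x. (\<Sum>c\<in>UNIV. label_density c x * h (x, c)) \<partial>PX)"
proof -
  have h_c [measurable]: "(\<lambda>x. h (x, c)) \<in> borel_measurable MX" for c using h by measurable
  have "(\<integral>\<^sup>+z. h z \<partial>D) = (\<Sum>c\<in>UNIV. \<integral>\<^sup>+x. h (x, c) \<partial>label_marginal c)"
    by (rule nn_integral_D_eq_sum_label_marginal[OF h])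
  also have "\<dots> = (\<Sum>c\<in>UNIV. \<integral>\<^sup>+x. label_density c x * h (x, c) \<partial>PX)"
    unfolding label_density_def
    by (intro sum.cong refl PX.RN_deriv_nn_integral absolutely_continuous_label_marginal) simp_all
  also have "\<dots> = (\<integral>\<^sup>+x. (\<Sum>c\<in>UNIV. label_density c x * h (x, c)) \<partial>PX)"
    by (intro nn_integral_sum[symmetric]) measurable
  finally show ?thesis .
qed

lemma AE_sum_label_density: "AE x in PX. (\<Sum>c\<in>UNIV. label_density c x) = 1"
proof (rule PX.density_unique_finite_measure)
  fix A assume "A \<in> sets PX"
  then have A [measurable]: "A \<in> sets MX" by simp
  have "(\<integral>\<^sup>+x. (\<Sum>c\<in>UNIV. label_density c x) * indicator A x \<partial>PX)
      = (\<integral>\<^sup>+x. (\<Sum>c\<in>UNIV. label_density c x * indicator A (fst (x, c))) \<partial>PX)"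
    by (simp add: sum_distrib_right)
  also have "\<dots> = (\<integral>\<^sup>+z. indicator A (fst z) \<partial>D)"
    by (intro nn_integral_D_eq_label_density[symmetric]) measurable
  also have "\<dots> = (\<integral>\<^sup>+x. 1 * indicator A x \<partial>PX)"
    using measurable_fst_D by (simp add: nn_integral_distr[symmetric])
  finally show "(\<integral>\<^sup>+x. (\<Sum>c\<in>UNIV. label_density c x) * indicator A x \<partial>PX)
      = (\<integral>\<^sup>+x. 1 * indicator A x \<partial>PX)" .
qed measurable

end

locale label_disintegration = labelled_measure D MX
  for D :: "('x \<times> 'k::{finite,linorder}) measure" and MX :: "'x measure" +
  fixes q :: "'k \<Rightarrow> 'x \<Rightarrow> real"
  assumes measurable_q [measurable]: "\<And>c. q c \<in> borel_measurable MX"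
    and q_nonneg: "\<And>x c. x \<in> space MX \<Longrightarrow> 0 \<le> q c x"
    and sum_q: "\<And>x. x \<in> space MX \<Longrightarrow> (\<Sum>c\<in>UNIV. q c x) = 1"
    and nn_integral_D: "\<And>h. h \<in> borel_measurable (MX \<Otimes>\<^sub>M count_space UNIV) \<Longrightarrow>
      (\<integral>\<^sup>+z. h z \<partial>D) = (\<integral>\<^sup>+x. (\<Sum>c\<in>UNIV. ennreal (q c x) * h (x, c)) \<partial>PX)"

text \<open>Off the null set where the label densities do not sum to one they are finite and can be
  turned into real conditional probabilities; on it any probability vector will do.\<close>

lemma label_disintegration_exists:
  fixes D :: "('x \<times> 'k::{finite,linorder}) measure"
  assumes "labelled_measure D MX"
  obtains q where "label_disintegration D MX q"
proof -
  interpret labelled_measure D MX by fact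
  define G where "G = {x \<in> space MX. (\<Sum>c\<in>UNIV. label_density c x) = 1}"
  have [measurable]: "G \<in> sets MX" unfolding G_def by measurable
  define q where "q c x = (if x \<in> G then enn2real (label_density c x) else 1 / real CARD('k))" for c x
  have finite_density: "label_density c x < top" if "x \<in> G" for c x
  proof -
    have "label_density c x \<le> (\<Sum>c\<in>UNIV. label_density c x)" by (rule member_le_sum) auto
    then show ?thesis using that ennreal_one_less_top unfolding G_def by (simp add: le_less_trans)
  qed
  show ?thesis
  proof (intro that label_disintegration.intro[OF assms] label_disintegration_axioms.intro)
    show "q c \<in> borel_measurable MX" for c unfolding q_def by measurable
    show "0 \<le> q c x" for c x unfolding q_def by auto
    show "(\<Sum>c\<in>UNIV. q c x) = 1" if "x \<in> space MX" for x
    proof (cases "x \<in> G")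
      case True
      then have "(\<Sum>c\<in>UNIV. q c x) = enn2real (\<Sum>c\<in>UNIV. label_density c x)"
        using finite_density unfolding q_def by (simp add: enn2real_sum)
      also have "\<dots> = 1" using True unfolding G_def by simp
      finally show ?thesis .
    qed (simp add: q_def)
    fix h :: "'x \<times> 'k \<Rightarrow> ennreal" assume h: "h \<in> borel_measurable (MX \<Otimes>\<^sub>M count_space UNIV)"
    have "AE x in PX. x \<in> G"
      using AE_sum_label_density by (rule AE_mp) (auto simp: G_def)
    then have "(\<integral>\<^sup>+x. (\<Sum>c\<in>UNIV. label_density c x * h (x, c)) \<partial>PX)
        = (\<integral>\<^sup>+x. (\<Sum>c\<in>UNIV. ennreal (q c x) * h (x, c)) \<partial>PX)"
      by (rule nn_integral_cong_AE[OF AE_mp]) (auto simp: q_def ennreal_enn2real[OF finite_density])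
    then show "(\<integral>\<^sup>+z. h z \<partial>D) = (\<integral>\<^sup>+x. (\<Sum>c\<in>UNIV. ennreal (q c x) * h (x, c)) \<partial>PX)"
      using nn_integral_D_eq_label_density[OF h] by simp
  qed
qed

context label_disintegration
begin

definition cond_dist :: "'x \<Rightarrow> (real, 'k) vec" where
  "cond_dist x = (\<chi> c. q c x)"

lemma cond_dist_in_prob_simplex: "x \<in> space MX \<Longrightarrow> cond_dist x \<in> prob_simplex"
  by (simp add: prob_simplex_def cond_dist_def q_nonneg sum_q)

definition cond_mean :: "('x \<times> 'k \<Rightarrow> real) \<Rightarrow> 'x \<Rightarrow> real" where
  "cond_mean u x = (\<Sum>c\<in>UNIV. q c x * u (x, c))"

lemma measurable_cond_mean [measurable]:
  assumes "u \<in> borel_measurable (MX \<Otimes>\<^sub>M count_space UNIV)"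
  shows "cond_mean u \<in> borel_measurable MX"
  unfolding cond_mean_def using assms by measurable

lemma cond_mean_ge:
  assumes "\<And>x c. x \<in> space MX \<Longrightarrow> B \<le> u (x, c)" and "x \<in> space MX"
  shows "B \<le> cond_mean u x"
  using prob_simplex_sum_ge[OF cond_dist_in_prob_simplex[OF assms(2)], of B "\<lambda>c. u (x, c)"] assms
  by (simp add: cond_mean_def cond_dist_def)

lemma eexp_eq_nn_integral_cond_mean:
  assumes u: "u \<in> borel_measurable (MX \<Otimes>\<^sub>M count_space UNIV)"
    and lb: "\<And>x c. x \<in> space MX \<Longrightarrow> B \<le> u (x, c)"
  shows "eexp D u = ereal B + enn2ereal (\<integral>\<^sup>+x. ennreal (cond_mean u x - B) \<partial>PX)"
proof -
  have "eexp D u = ereal B + enn2ereal (\<integral>\<^sup>+z. ennreal (u z - B) \<partial>D)"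
    using u lb sets_eq_imp_space_eq[OF sets_D]
    by (intro D.eexp_eq_shift) (auto simp: measurable_D_iff space_pair_measure)
  also have "(\<integral>\<^sup>+z. ennreal (u z - B) \<partial>D)
      = (\<integral>\<^sup>+x. (\<Sum>c\<in>UNIV. ennreal (q c x) * ennreal (u (x, c) - B)) \<partial>PX)"
    using u by (intro nn_integral_D measurable_compose[OF _ measurable_ennreal]) simp
  also have "\<dots> = (\<integral>\<^sup>+x. ennreal (cond_mean u x - B) \<partial>PX)"
  proof (rule nn_integral_cong)
    fix x assume "x \<in> space PX"
    then have x: "x \<in> space MX" by simp
    have "(\<Sum>c\<in>UNIV. ennreal (q c x) * ennreal (u (x, c) - B)) = (\<Sum>c\<in>UNIV. ennreal (q c x * (u (x, c) - B)))"
      using q_nonneg[OF x] lb[OF x] by (simp add: ennreal_mult)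
    also have "\<dots> = ennreal (\<Sum>c\<in>UNIV. q c x * (u (x, c) - B))"
      using q_nonneg[OF x] lb[OF x] by (intro sum_ennreal) simp
    also have "(\<Sum>c\<in>UNIV. q c x * (u (x, c) - B)) = cond_mean u x - B"
      using sum_q[OF x]
      by (simp add: cond_mean_def right_diff_distrib sum_subtractf sum_distrib_right[symmetric])
    finally show "(\<Sum>c\<in>UNIV. ennreal (q c x) * ennreal (u (x, c) - B)) = ennreal (cond_mean u x - B)" .
  qed
  finally show ?thesis .
qed

lemma integrable_cond_mean:
  assumes u: "u \<in> borel_measurable (MX \<Otimes>\<^sub>M count_space UNIV)"
    and lb: "\<And>x c. x \<in> space MX \<Longrightarrow> B \<le> u (x, c)"
    and finite: "eexp D u \<noteq> \<infinity>"
  shows "integrable PX (cond_mean u)"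
proof -
  have "(\<integral>\<^sup>+x. ennreal (cond_mean u x - B) \<partial>PX) < \<infinity>"
    using finite eexp_eq_nn_integral_cond_mean[OF u lb] by (auto simp: top.not_eq_extremum)
  then have "integrable PX (\<lambda>x. cond_mean u x - B)"
    using u cond_mean_ge[of B u, OF lb] by (intro integrableI_nonneg) auto
  then have "integrable PX (\<lambda>x. (cond_mean u x - B) + B)"
    by (rule Bochner_Integration.integrable_add) simp
  then show ?thesis by simp
qed

lemma eexp_eq_integral_cond_mean:
  assumes u: "u \<in> borel_measurable (MX \<Otimes>\<^sub>M count_space UNIV)"
    and lb: "\<And>x c. x \<in> space MX \<Longrightarrow> B \<le> u (x, c)"
    and int: "integrable PX (cond_mean u)"
  shows "eexp D u = ereal (\<integral>x. cond_mean u x \<partial>PX)"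
proof -
  have "(\<integral>\<^sup>+x. ennreal (cond_mean u x - B) \<partial>PX) = ennreal (\<integral>x. cond_mean u x - B \<partial>PX)"
    using int cond_mean_ge[of B u, OF lb] by (intro nn_integral_eq_integral) auto
  moreover have "(\<integral>x. cond_mean u x - B \<partial>PX) = (\<integral>x. cond_mean u x \<partial>PX) - B"
    using int PX.prob_space by simp
  moreover have "0 \<le> (\<integral>x. cond_mean u x - B \<partial>PX)"
    using cond_mean_ge[of B u, OF lb] by (intro integral_nonneg_AE) auto
  ultimately show ?thesis using eexp_eq_nn_integral_cond_mean[OF u lb] by simp
qed

end

section \<open>Risks as integrals of conditional risks\<close>

context label_disintegration
begin

lemma measurable_surrogate_loss:
  fixes Phi :: "(real, 'k) vec \<Rightarrow> 'k \<Rightarrow> real"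
  assumes "\<And>y. continuous_on UNIV (\<lambda>v. Phi v y)" and [measurable]: "g \<in> borel_measurable MX"
  shows "(\<lambda>(x, y). Phi (g x) y) \<in> borel_measurable (MX \<Otimes>\<^sub>M count_space UNIV)"
proof (rule measurable_pair_measure_countable2)
  fix y
  have [measurable]: "(\<lambda>v. Phi v y) \<in> borel_measurable borel"
    using assms(1) by (rule borel_measurable_continuous_onI)
  show "(\<lambda>x. case (x, y) of (x, y) \<Rightarrow> Phi (g x) y) \<in> borel_measurable MX" by simp
qed (simp add: countable_finite)

lemma measurable_task_loss:
  fixes L :: "'k \<Rightarrow> 'k \<Rightarrow> real"
  assumes g: "g \<in> borel_measurable MX"
  shows "(\<lambda>(x, y). L (pred (g x)) y) \<in> borel_measurable (MX \<Otimes>\<^sub>M count_space UNIV)"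
proof (rule measurable_pair_measure_countable2)
  have "(\<lambda>x. pred (g x)) \<in> measurable MX (count_space UNIV)"
    using measurable_compose[OF g measurable_pred] by simp
  then show "(\<lambda>x. case (x, y) of (x, y) \<Rightarrow> L (pred (g x)) y) \<in> borel_measurable MX" for y
    by (simp add: measurable_compose_countable'[where f="\<lambda>i x. L i y"])
qed (simp add: countable_finite)

lemma cond_mean_surrogate_loss:
  "cond_mean (\<lambda>(x, y). Phi (g x) y) = (\<lambda>x. cond_surr Phi (g x) (cond_dist x))"
  by (simp add: fun_eq_iff cond_mean_def cond_surr_def cond_dist_def)

lemma cond_mean_task_loss:
  "cond_mean (\<lambda>(x, y). L (pred (g x)) y) = (\<lambda>x. cond_risk L (g x) (cond_dist x))"
  by (simp add: fun_eq_iff cond_mean_def cond_risk_def cond_dist_def)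

lemma measurable_cond_surr [measurable]:
  fixes Phi :: "(real, 'k) vec \<Rightarrow> 'k \<Rightarrow> real"
  assumes "\<And>y. continuous_on UNIV (\<lambda>v. Phi v y)" "g \<in> borel_measurable MX"
  shows "(\<lambda>x. cond_surr Phi (g x) (cond_dist x)) \<in> borel_measurable MX"
  using measurable_cond_mean[OF measurable_surrogate_loss[of Phi g, OF assms]] by (simp add: cond_mean_surrogate_loss)

lemma measurable_cond_risk [measurable]:
  assumes "g \<in> borel_measurable MX"
  shows "(\<lambda>x. cond_risk L (g x) (cond_dist x)) \<in> borel_measurable MX"
  using measurable_cond_mean[OF measurable_task_loss[of g L, OF assms]] by (simp add: cond_mean_task_loss)

lemma risk_L_eq_integral:
  assumes L: "\<And>c y. 0 \<le> L c y" and g: "g \<in> borel_measurable MX"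
  shows "integrable PX (\<lambda>x. cond_risk L (g x) (cond_dist x))"
    and "risk_L D L g = ereal (\<integral>x. cond_risk L (g x) (cond_dist x) \<partial>PX)"
proof -
  show int: "integrable PX (\<lambda>x. cond_risk L (g x) (cond_dist x))"
    using cond_risk_bounds[of L, OF L cond_dist_in_prob_simplex] g
    by (intro PX.integrable_const_bound[where B="\<Sum>a\<in>UNIV. \<Sum>b\<in>UNIV. L a b"]) auto
  show "risk_L D L g = ereal (\<integral>x. cond_risk L (g x) (cond_dist x) \<partial>PX)"
    using eexp_eq_integral_cond_mean[OF measurable_task_loss[of g L, OF g], of 0] int L
    unfolding risk_L_def by (simp add: cond_mean_task_loss)
qed

lemma risk_Phi_eq_integral:
  fixes Phi :: "(real, 'k) vec \<Rightarrow> 'k \<Rightarrow> real"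
  assumes "\<And>y. continuous_on UNIV (\<lambda>v. Phi v y)" and B: "\<And>v y. B \<le> Phi v y"
    and g: "g \<in> borel_measurable MX" and int: "integrable PX (\<lambda>x. cond_surr Phi (g x) (cond_dist x))"
  shows "risk_Phi D Phi g = ereal (\<integral>x. cond_surr Phi (g x) (cond_dist x) \<partial>PX)"
  using eexp_eq_integral_cond_mean[OF measurable_surrogate_loss[of Phi g, OF assms(1) g], of B] int B
  unfolding risk_Phi_def by (simp add: cond_mean_surrogate_loss)

lemma integrable_cond_surr:
  fixes Phi :: "(real, 'k) vec \<Rightarrow> 'k \<Rightarrow> real"
  assumes "\<And>y. continuous_on UNIV (\<lambda>v. Phi v y)" and B: "\<And>v y. B \<le> Phi v y"
    and g: "g \<in> borel_measurable MX" and finite: "risk_Phi D Phi g \<noteq> \<infinity>"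
  shows "integrable PX (\<lambda>x. cond_surr Phi (g x) (cond_dist x))"
  using integrable_cond_mean[OF measurable_surrogate_loss[of Phi g, OF assms(1) g], of B] finite B
  unfolding risk_Phi_def by (simp add: cond_mean_surrogate_loss)

lemma integral_INF_cond_risk_le_INF_risk_L:
  fixes L :: "'k \<Rightarrow> 'k \<Rightarrow> real"
  assumes L: "\<And>c y. 0 \<le> L c y" and F: "F \<noteq> {}"
  shows "integrable PX (\<lambda>x. INF h\<in>F. cond_risk L h (cond_dist x))"
    and "ereal (\<integral>x. (INF h\<in>F. cond_risk L h (cond_dist x)) \<partial>PX) \<le> (INF g\<in>score_funs MX F. risk_L D L g)"
proof -
  let ?I = "\<lambda>x. INF h\<in>F. cond_risk L h (cond_dist x)"
  note bounds = cond_risk_bounds[of L, OF L cond_dist_in_prob_simplex]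
  have I_le: "?I x \<le> cond_risk L h (cond_dist x)" if "x \<in> space MX" "h \<in> F" for x h
    using L cond_dist_in_prob_simplex[OF that(1)] that(2) by (rule INF_cond_risk_le)
  have I_nonneg: "0 \<le> ?I x" if "x \<in> space MX" for x
    using bounds[OF that] F by (intro cINF_greatest) auto
  have "?I \<in> borel_measurable MX"
    unfolding INF_cond_risk_eq_Min[OF F] cond_dist_def by simp
  moreover have "\<bar>?I x\<bar> \<le> (\<Sum>a\<in>UNIV. \<Sum>b\<in>UNIV. L a b)" if "x \<in> space MX" for x
  proof -
    obtain h where "h \<in> F" using F by blast
    then show ?thesis
      using I_le[OF that \<open>h \<in> F\<close>] I_nonneg[OF that] bounds(2)[OF that, of h] by simp
  qed
  ultimately show int: "integrable PX ?I"
    by (intro PX.integrable_const_bound[where B="\<Sum>a\<in>UNIV. \<Sum>b\<in>UNIV. L a b"]) auto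
  show "ereal (\<integral>x. ?I x \<partial>PX) \<le> (INF g\<in>score_funs MX F. risk_L D L g)"
  proof (rule INF_greatest)
    fix g assume "g \<in> score_funs MX F"
    then have g: "g \<in> borel_measurable MX" "\<And>x. x \<in> space MX \<Longrightarrow> g x \<in> F"
      by (auto simp: score_funs_def)
    have "(\<integral>x. ?I x \<partial>PX) \<le> (\<integral>x. cond_risk L (g x) (cond_dist x) \<partial>PX)"
      using int risk_L_eq_integral(1)[OF L g(1)] I_le g(2) by (intro integral_mono) auto
    then show "ereal (\<integral>x. ?I x \<partial>PX) \<le> risk_L D L g"
      using risk_L_eq_integral(2)[OF L g(1)] by simp
  qed
qed

lemma minimizing_score_sequence:
  fixes Phi :: "(real, 'k) vec \<Rightarrow> 'k \<Rightarrow> real"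
  assumes cont: "\<And>y. continuous_on UNIV (\<lambda>v. Phi v y)" and B: "\<And>v y. B \<le> Phi v y"
    and F: "F \<noteq> {}"
  obtains gs :: "nat \<Rightarrow> 'x \<Rightarrow> (real, 'k) vec" and K where
    "\<And>m. gs m \<in> score_funs MX F"
    "\<And>m x. x \<in> space MX \<Longrightarrow> \<bar>cond_surr Phi (gs m x) (cond_dist x)\<bar> \<le> K"
    "\<And>x. x \<in> space MX \<Longrightarrow>
      (\<lambda>m. cond_surr Phi (gs m x) (cond_dist x)) \<longlonglongrightarrow> (INF h\<in>F. cond_surr Phi h (cond_dist x))"
proof -
  obtain t :: "nat \<Rightarrow> (real, 'k) vec" where t: "range t \<subseteq> F" "F \<subseteq> closure (range t)"
    using dense_sequence[OF F] by blast
  define c where "c h x = cond_surr Phi h (cond_dist x)" for h x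
  define gs where "gs m = running_argmin t c m" for m
  have c_ge: "B \<le> c h x" if "x \<in> space MX" for h x
    unfolding c_def cond_surr_def using B by (intro prob_simplex_sum_ge cond_dist_in_prob_simplex that)
  have Phi_le: "Phi h y \<le> (\<Sum>y\<in>UNIV. \<bar>Phi h y\<bar>)" for h y
    using member_le_sum[of y UNIV "\<lambda>y. \<bar>Phi h y\<bar>"] by simp
  have c_le: "c h x \<le> (\<Sum>y\<in>UNIV. \<bar>Phi h y\<bar>)" if "x \<in> space MX" for h x
    unfolding c_def cond_surr_def by (intro prob_simplex_sum_le cond_dist_in_prob_simplex that Phi_le)
  show ?thesis
  proof
    have "gs m \<in> borel_measurable MX" for m
      unfolding gs_def c_def using cont by (intro measurable_running_argmin) simp_all
    moreover have "gs m x \<in> F" for m x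
      using running_argmin_in_range[of t c m x] t(1) unfolding gs_def by blast
    ultimately show "gs m \<in> score_funs MX F" for m
      by (simp add: score_funs_def)
    show "\<bar>cond_surr Phi (gs m x) (cond_dist x)\<bar> \<le> \<bar>B\<bar> + (\<Sum>y\<in>UNIV. \<bar>Phi (t 0) y\<bar>)"
      if "x \<in> space MX" for m x
      using running_argmin_le[of 0 m c t x] c_ge[OF that, of "gs m x"] c_le[OF that, of "t 0"]
        abs_ge_minus_self[of B] abs_ge_zero[of B] sum_nonneg[of UNIV "\<lambda>y. \<bar>Phi (t 0) y\<bar>", OF abs_ge_zero]
      unfolding gs_def c_def abs_le_iff by linarith
    show "(\<lambda>m. cond_surr Phi (gs m x) (cond_dist x)) \<longlonglongrightarrow> (INF h\<in>F. cond_surr Phi h (cond_dist x))"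
      if "x \<in> space MX" for x
    proof -
      have "(INF h\<in>F. c h x) = (INF n. c (t n) x)"
        using c_ge[OF that] continuous_on_cond_surr[OF cont]
        by (intro cINF_eq_INF_dense_sequence t) (auto simp: c_def bdd_below_def)
      moreover have "bdd_below (range (\<lambda>n. c (t n) x))"
        using c_ge[OF that] by (auto simp: bdd_below_def)
      ultimately show ?thesis
        using running_argmin_tendsto_INF[of c t x] unfolding gs_def c_def by simp
    qed
  qed
qed

lemma INF_risk_Phi_le_integral_INF_cond_surr:
  fixes Phi :: "(real, 'k) vec \<Rightarrow> 'k \<Rightarrow> real"
  assumes cont: "\<And>y. continuous_on UNIV (\<lambda>v. Phi v y)" and B: "\<And>v y. B \<le> Phi v y"
    and F: "F \<noteq> {}"
  shows "integrable PX (\<lambda>x. INF h\<in>F. cond_surr Phi h (cond_dist x))"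
    and "(INF g\<in>score_funs MX F. risk_Phi D Phi g) \<le> ereal (\<integral>x. (INF h\<in>F. cond_surr Phi h (cond_dist x)) \<partial>PX)"
proof -
  obtain gs K where gs: "\<And>m. gs m \<in> score_funs MX F"
    and bound: "\<And>m x. x \<in> space MX \<Longrightarrow> \<bar>cond_surr Phi (gs m x) (cond_dist x)\<bar> \<le> K"
    and lim: "\<And>x. x \<in> space MX \<Longrightarrow>
      (\<lambda>m. cond_surr Phi (gs m x) (cond_dist x)) \<longlonglongrightarrow> (INF h\<in>F. cond_surr Phi h (cond_dist x))"
    by (rule minimizing_score_sequence[where Phi=Phi, OF cont B F]) (rule that)
  let ?s = "\<lambda>m x. cond_surr Phi (gs m x) (cond_dist x)"
  let ?I = "\<lambda>x. INF h\<in>F. cond_surr Phi h (cond_dist x)"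
  have gs_meas: "gs m \<in> borel_measurable MX" for m using gs by (simp add: score_funs_def)
  have s_meas: "?s m \<in> borel_measurable MX" for m using cont gs_meas by measurable
  have I_meas: "?I \<in> borel_measurable MX" using lim s_meas by (rule borel_measurable_LIMSEQ_real)
  note dominated = integrable_dominated_convergence integrable_dominated_convergence2
    integral_dominated_convergence
  note dominated = dominated[where w="\<lambda>_. K" and s="?s" and f="?I" and M=PX]
  have AE_lim: "AE x in PX. (\<lambda>m. ?s m x) \<longlonglongrightarrow> ?I x"
    using lim by (intro AE_I2) simp
  have AE_bound: "AE x in PX. norm (?s m x) \<le> K" for m
    using bound by (intro AE_I2) simp
  note dominated = dominated[OF _ _ _ AE_lim AE_bound, simplified]
  have s_int: "integrable PX (?s m)" for m
    using dominated(2) s_meas I_meas by simp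
  show "integrable PX ?I"
    using dominated(1) s_meas I_meas by simp
  have "(\<lambda>m. \<integral>x. ?s m x \<partial>PX) \<longlonglongrightarrow> (\<integral>x. ?I x \<partial>PX)"
    using dominated(3) s_meas I_meas by simp
  moreover have "(INF g\<in>score_funs MX F. risk_Phi D Phi g) \<le> ereal (\<integral>x. ?s m x \<partial>PX)" for m
    using INF_lower[OF gs, of "risk_Phi D Phi"] risk_Phi_eq_integral[OF cont B gs_meas s_int] by simp
  ultimately show "(INF g\<in>score_funs MX F. risk_Phi D Phi g) \<le> ereal (\<integral>x. ?I x \<partial>PX)"
    by (intro LIMSEQ_le_const[OF tendsto_ereal]) auto
qed


lemma excess_risk_nonneg:
  assumes "\<And>c y. 0 \<le> L c y" "f \<in> F" "x \<in> space MX"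
  shows "0 \<le> excess_risk L F f (cond_dist x)"
  using INF_cond_risk_le[OF assms(1) cond_dist_in_prob_simplex[OF assms(3)] assms(2)]
  unfolding excess_risk_def by simp

lemma integral_excess_risk_ge:
  fixes L :: "'k \<Rightarrow> 'k \<Rightarrow> real"
  assumes L: "\<And>c y. 0 \<le> L c y" and F: "F \<noteq> {}" and f: "f \<in> score_funs MX F"
    and large: "(INF g\<in>score_funs MX F. risk_L D L g) + ereal e \<le> risk_L D L f"
  shows "integrable PX (\<lambda>x. excess_risk L F (f x) (cond_dist x))"
    and "e \<le> (\<integral>x. excess_risk L F (f x) (cond_dist x) \<partial>PX)"
proof -
  note task_INF = integral_INF_cond_risk_le_INF_risk_L[of L, OF L F]
  have f_meas: "f \<in> borel_measurable MX" using f by (simp add: score_funs_def)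
  note task_f = risk_L_eq_integral[of L, OF L f_meas]
  show "integrable PX (\<lambda>x. excess_risk L F (f x) (cond_dist x))"
    unfolding excess_risk_def using task_f(1) task_INF(1) by simp
  have "ereal (\<integral>x. (INF h\<in>F. cond_risk L h (cond_dist x)) \<partial>PX) + ereal e \<le> risk_L D L f"
    using add_right_mono[OF task_INF(2)] large by (rule order.trans)
  then show "e \<le> (\<integral>x. excess_risk L F (f x) (cond_dist x) \<partial>PX)"
    unfolding excess_risk_def using task_f task_INF(1) by simp
qed

lemma INF_risk_Phi_plus_integral_excess_surr_le:
  fixes Phi :: "(real, 'k) vec \<Rightarrow> 'k \<Rightarrow> real"
  assumes cont: "\<And>y. continuous_on UNIV (\<lambda>v. Phi v y)" and B: "\<And>v y. B \<le> Phi v y"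
    and F: "F \<noteq> {}" and f: "f \<in> score_funs MX F" and finite: "risk_Phi D Phi f \<noteq> \<infinity>"
  shows "integrable PX (\<lambda>x. excess_surr Phi F (f x) (cond_dist x))"
    and "(INF g\<in>score_funs MX F. risk_Phi D Phi g) + ereal (\<integral>x. excess_surr Phi F (f x) (cond_dist x) \<partial>PX)
      \<le> risk_Phi D Phi f"
proof -
  note surr_INF = INF_risk_Phi_le_integral_INF_cond_surr[OF cont B F]
  have f_meas: "f \<in> borel_measurable MX" using f by (simp add: score_funs_def)
  have surr_f: "integrable PX (\<lambda>x. cond_surr Phi (f x) (cond_dist x))"
    by (rule integrable_cond_surr[OF cont B f_meas finite])
  show "integrable PX (\<lambda>x. excess_surr Phi F (f x) (cond_dist x))"
    unfolding excess_surr_def using surr_f surr_INF(1) by simp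
  have "(INF g\<in>score_funs MX F. risk_Phi D Phi g) + ereal (\<integral>x. excess_surr Phi F (f x) (cond_dist x) \<partial>PX)
      \<le> ereal (\<integral>x. (INF h\<in>F. cond_surr Phi h (cond_dist x)) \<partial>PX)
        + ereal (\<integral>x. excess_surr Phi F (f x) (cond_dist x) \<partial>PX)"
    using surr_INF(2) by (rule add_right_mono)
  also have "\<dots> = risk_Phi D Phi f"
    using risk_Phi_eq_integral[OF cont B f_meas surr_f] surr_f surr_INF(1)
    unfolding excess_surr_def by simp
  finally show "(INF g\<in>score_funs MX F. risk_Phi D Phi g) + ereal (\<integral>x. excess_surr Phi F (f x) (cond_dist x) \<partial>PX)
      \<le> risk_Phi D Phi f" .
qed

end

theorem theorem2:
  fixes L :: "'k::{finite,linorder} \<Rightarrow> 'k::{finite,linorder} \<Rightarrow> real"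
    and Phi :: "real ^ 'k::{finite,linorder} \<Rightarrow> 'k::{finite,linorder} \<Rightarrow> real"
    and F :: "(real ^ 'k::{finite,linorder}) set"
    and MX :: "'x measure"
    and D :: "('x \<times> 'k::{finite,linorder}) measure"
    and Hc :: "real \<Rightarrow> ereal"
    and eps :: real
    and f :: "'x \<Rightarrow> real ^ 'k::{finite,linorder}"
  assumes L_nonneg: "\<And>c y. 0 \<le> L c y"
    and Phi_cont: "\<And>y. continuous_on UNIV (\<lambda>g. Phi g y)"
    and Phi_bdd: "\<exists>B. \<forall>g y. B \<le> Phi g y"
    and F_subspace: "subspace F"
    and D_prob: "prob_space D"
    and D_sets: "sets D = sets (MX \<Otimes>\<^sub>M count_space UNIV)"
    and Hc_nonneg: "\<And>e. 0 \<le> e \<Longrightarrow> 0 \<le> Hc e"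
    and Hc_mono: "\<And>a b. 0 \<le> a \<Longrightarrow> a \<le> b \<Longrightarrow> Hc a \<le> Hc b"
    and Hc_convex: "ereal_convex_nonneg Hc"
    and Hc_le: "\<And>e. 0 \<le> e \<Longrightarrow> Hc e \<le> calib Phi L F e"
    and eps_pos: "0 < eps"
    and Hc_fin: "\<bar>Hc eps\<bar> \<noteq> \<infinity>"
    and f_score: "f \<in> score_funs MX F"
    and small_surr: "risk_Phi D Phi f < (INF g\<in>score_funs MX F. risk_Phi D Phi g) + Hc eps"
  shows "risk_L D L f < (INF g\<in>score_funs MX F. risk_L D L g) + ereal eps"
proof (rule ccontr)
  assume "\<not> ?thesis"
  then have large_risk: "(INF g\<in>score_funs MX F. risk_L D L g) + ereal eps \<le> risk_L D L f" by simp
  obtain B where B: "\<And>v y. B \<le> Phi v y" using Phi_bdd by blast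
  obtain q where "label_disintegration D MX q"
    using labelled_measure.intro[OF D_prob D_sets] by (rule label_disintegration_exists)
  then interpret label_disintegration D MX q .
  have F: "F \<noteq> {}" using subspace_0[OF F_subspace] by auto
  have f_F: "f x \<in> F" if "x \<in> space MX" for x using f_score that by (simp add: score_funs_def)
  note task = integral_excess_risk_ge[of L, OF L_nonneg F f_score large_risk]
  have "risk_Phi D Phi f \<noteq> \<infinity>" using small_surr by auto
  note surr = INF_risk_Phi_plus_integral_excess_surr_le[OF Phi_cont B F f_score this]
  have "mono_on {0..} Hc" using Hc_mono by (auto intro: mono_onI)
  moreover have "Hc 0 \<noteq> -\<infinity>" using Hc_nonneg[of 0] by auto
  ultimately have "Hc eps \<le> ereal (\<integral>x. excess_surr Phi F (f x) (cond_dist x) \<partial>PX)"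
  proof (rule ereal_convex_mono_le_integral[OF Hc_convex _ _ eps_pos Hc_fin PX.prob_space_axioms
        task(1) surr(1) _ _ task(2)])
    fix x assume "x \<in> space PX"
    then have x: "x \<in> space MX" by simp
    show R_nonneg: "0 \<le> excess_risk L F (f x) (cond_dist x)"
      by (rule excess_risk_nonneg[OF L_nonneg f_F[OF x] x])
    show "Hc (excess_risk L F (f x) (cond_dist x)) \<le> ereal (excess_surr Phi F (f x) (cond_dist x))"
      using Hc_le[OF R_nonneg] calib_le_excess_surr[OF f_F[OF x] cond_dist_in_prob_simplex[OF x] order.refl]
      by (rule order.trans)
  qed
  then show False
    using small_surr surr(2) add_left_mono[of "Hc eps"] by (meson not_le order.trans)
qed

end
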